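(* Let $\mathbf d=(d_1\ge\cdots\ge d_n)$ be a weakly decreasing sequence of nonnegative integers and $\mathbf x^{\mathbf d}=x_1^{d_1}\cdots x_n^{d_n}$. If $w\in\mathfrak S_n$ satisfies $\mathrm{Des}(w)\subseteq\mathrm{Des}(\mathbf d)$, then the leading term of $\overline\pi_w(\mathbf x^{\mathbf d})$ with respect to neglex is the monomial $w(\mathbf x^{\mathbf d})=x_{w(1)}^{d_1}\cdots x_{w(n)}^{d_n}$.
   Context: $H_n(0)$ acts on $\mathbb F[x_1,\dots,x_n]$ ($\mathbb F$ any field) via isobaric Demazure operators $\pi_i(f)=\frac{x_if-x_{i+1}s_i(f)}{x_i-x_{i+1}}$, where $s_i$ swaps $x_i$ and $x_{i+1}$. $\overline\pi_i=\pi_i-1$, i.e. $\overline\pi_i(f)=\frac{x_{i+1}(f-s_i(f))}{x_i-x_{i+1}}$, and $\overline\pi_w=\overline\pi_{i_1}\cdots\overline\pi_{i_\ell}$ for any reduced expression $w=s_{i_1}\cdots s_{i_\ell}$. A permutation acts on polynomials by $x_i\mapsto x_{w(i)}$. For an integer sequence $\mathbf i$, $\mathrm{Des}(\mathbf i)=\{j: i_j>i_{j+1}\}$; for $w\in\mathfrak S_n$, $\mathrm{Des}(w)=\{j:w(j)>w(j+1)\}$. Neglex is the lexicographic term order with $x_n>\cdots>x_1$. *)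

theory Defs
  imports "HOL-Library.Poly_Mapping" "HOL-Combinatorics.Permutations"
begin

(* Multivariate polynomials over a field 'a in variables x_1, x_2, ...:
   a monomial is an exponent vector (nat \<Rightarrow>\<^sub>0 nat), variable index i \<mapsto> exponent;
   a polynomial maps monomials to coefficients (finite support). *)
type_synonym 'a mpoly = "(nat \<Rightarrow>\<^sub>0 nat) \<Rightarrow>\<^sub>0 'a"

definition var :: "nat \<Rightarrow> 'a::field mpoly" where
  "var i = Poly_Mapping.single (Poly_Mapping.single i 1) 1"

definition xpow :: "nat \<Rightarrow> (nat \<Rightarrow> nat) \<Rightarrow> 'a::field mpoly" where
  "xpow n d = (\<Prod>i\<in>{1..n}. var i ^ d i)"

definition perm_mono :: "(nat \<Rightarrow> nat) \<Rightarrow> (nat \<Rightarrow>\<^sub>0 nat) \<Rightarrow> (nat \<Rightarrow>\<^sub>0 nat)" where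
  "perm_mono w m = (\<Sum>i\<in>Poly_Mapping.keys m. Poly_Mapping.single (w i) (Poly_Mapping.lookup m i))"

definition perm_poly :: "(nat \<Rightarrow> nat) \<Rightarrow> 'a::field mpoly \<Rightarrow> 'a mpoly" where
  "perm_poly w f = (\<Sum>m\<in>Poly_Mapping.keys f. Poly_Mapping.single (perm_mono w m) (Poly_Mapping.lookup f m))"

definition s :: "nat \<Rightarrow> nat \<Rightarrow> nat" where
  "s i = transpose i (i+1)"

(* \<overline>\<pi>_i f = x_{i+1} (f - s_i f) / (x_i - x_{i+1}); exact division in the polynomial ring *)
definition pibar :: "nat \<Rightarrow> 'a::field mpoly \<Rightarrow> 'a mpoly" where
  "pibar i f = (THE g. (var i - var (i+1)) * g = var (i+1) * (f - perm_poly (s i) f))"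

definition pibar_word :: "nat list \<Rightarrow> 'a::field mpoly \<Rightarrow> 'a mpoly" where
  "pibar_word is = foldr (\<lambda>i g. pibar i \<circ> g) is id"

definition word_perm :: "nat list \<Rightarrow> nat \<Rightarrow> nat" where
  "word_perm is = foldr (\<lambda>i g. s i \<circ> g) is id"

(* Coxeter length of w in S_n = number of inversions *)
definition inv_count :: "nat \<Rightarrow> (nat \<Rightarrow> nat) \<Rightarrow> nat" where
  "inv_count n w = card {(i, j). 1 \<le> i \<and> i < j \<and> j \<le> n \<and> w i > w j}"

definition reduced_word :: "nat \<Rightarrow> (nat \<Rightarrow> nat) \<Rightarrow> nat list \<Rightarrow> bool" where
  "reduced_word n w is \<longleftrightarrow> (\<forall>i\<in>set is. 1 \<le> i \<and> i < n) \<and> word_perm is = w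
      \<and> length is = inv_count n w"

definition Des_seq :: "nat \<Rightarrow> (nat \<Rightarrow> nat) \<Rightarrow> nat set" where
  "Des_seq n d = {j. 1 \<le> j \<and> j < n \<and> d j > d (j+1)}"

definition Des_perm :: "nat \<Rightarrow> (nat \<Rightarrow> nat) \<Rightarrow> nat set" where
  "Des_perm n w = {j. 1 \<le> j \<and> j < n \<and> w j > w (j+1)}"

(* neglex: lex order with x_n > ... > x_1, i.e. compare exponents starting
   from the variable of largest index *)
definition neglex_less :: "(nat \<Rightarrow>\<^sub>0 nat) \<Rightarrow> (nat \<Rightarrow>\<^sub>0 nat) \<Rightarrow> bool" where
  "neglex_less m m' \<longleftrightarrow> (\<exists>k. Poly_Mapping.lookup m k < Poly_Mapping.lookup m' k \<and> (\<forall>j>k. Poly_Mapping.lookup m j = Poly_Mapping.lookup m' j))"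

definition neglex_leading_term :: "'a::field mpoly \<Rightarrow> 'a mpoly" where
  "neglex_leading_term f =
     (THE t. \<exists>m. m \<in> Poly_Mapping.keys f \<and> (\<forall>m'\<in>Poly_Mapping.keys f. m' \<noteq> m \<longrightarrow> neglex_less m' m)
                \<and> t = Poly_Mapping.single m (Poly_Mapping.lookup f m))"

end

theory Submission
  imports Defs "HOL-Library.Multiset"
begin

text \<open>
  Read a reduced word of \<open>w\<close> from the right and let \<open>E\<close> be the exponent vector of \<open>v(x\<^sup>d)\<close> for the
  current suffix \<open>v\<close>. Reducedness and \<open>Des(w) \<subseteq> Des(d)\<close> force every new letter \<open>s\<^sub>i\<close> to act on a strict
  descent \<open>E\<^sub>i\<^sub>+\<^sub>1 < E\<^sub>i\<close>. The invariant is that \<open>x\<^sup>E\<close> has coefficient 1 in the current polynomial and that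
  each of its exponent vectors is a mean of vectors dominated by \<open>E\<close>, i.e. having, on every final
  segment of positions and above every threshold, at most as many entries as \<open>E\<close>. The divided
  difference sends \<open>x\<^sup>m\<close> to monomials on the segment from \<open>m\<close> to \<open>s\<^sub>i m\<close>, which are means of \<open>m\<close> and
  \<open>s\<^sub>i m\<close>; both of these are dominated by \<open>s\<^sub>i E\<close>, so the invariant propagates. Dominated vectors are
  neglex-below \<open>E\<close>, and neglex down-sets are convex with their top as an extreme point, so every
  exponent other than \<open>E\<close> is neglex-smaller and only \<open>x\<^sup>E\<close> itself produces the monomial of \<open>s\<^sub>i E\<close>.
\<close>

section \<open>Neglex order and means of exponent vectors\<close>

definition neglex_lt :: "(nat \<Rightarrow> nat) \<Rightarrow> (nat \<Rightarrow> nat) \<Rightarrow> bool" where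
  "neglex_lt x y \<longleftrightarrow> (\<exists>k. x k < y k \<and> (\<forall>j>k. x j = y j))"

lemma neglex_lt_irrefl: "\<not> neglex_lt x x"
  unfolding neglex_lt_def by auto

lemma neglex_lt_asym: "neglex_lt x y \<Longrightarrow> \<not> neglex_lt y x"
  unfolding neglex_lt_def by (metis linorder_neqE_nat order_less_asym)

lemma neglex_lt_finite_diff:
  assumes "neglex_lt x y"
  shows "finite {j. x j \<noteq> y j}"
proof -
  obtain k where "\<forall>j>k. x j = y j" using assms unfolding neglex_lt_def by blast
  then have "{j. x j \<noteq> y j} \<subseteq> {..k}" by (auto simp: not_less[symmetric])
  then show ?thesis using finite_subset by blast
qed

lemma last_difference:
  fixes x y :: "'a::linorder \<Rightarrow> 'b"
  assumes "finite {j. x j \<noteq> y j}" and "x \<noteq> y"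
  obtains K where "x K \<noteq> y K" and "\<And>j. K < j \<Longrightarrow> x j = y j"
proof -
  let ?D = "{j. x j \<noteq> y j}"
  have "?D \<noteq> {}" using assms(2) by (auto simp: fun_eq_iff)
  then have "Max ?D \<in> ?D" by (rule Max_in[OF assms(1)])
  moreover have "x j = y j" if "Max ?D < j" for j using Max_ge[OF assms(1), of j] that by fastforce
  ultimately show ?thesis using that by blast
qed

lemma neglex_less_iff: "neglex_less m m' \<longleftrightarrow> neglex_lt (Poly_Mapping.lookup m) (Poly_Mapping.lookup m')"
  unfolding neglex_less_def neglex_lt_def ..

definition is_mean :: "('i \<Rightarrow> nat) multiset \<Rightarrow> ('i \<Rightarrow> nat) \<Rightarrow> bool" where
  "is_mean M b \<longleftrightarrow> M \<noteq> {#} \<and> (\<forall>j. (\<Sum>x\<in>#M. x j) = size M * b j)"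

definition mean_of :: "('i \<Rightarrow> nat) set \<Rightarrow> ('i \<Rightarrow> nat) \<Rightarrow> bool" where
  "mean_of A b \<longleftrightarrow> (\<exists>M. set_mset M \<subseteq> A \<and> is_mean M b)"

lemma is_mean_singleton: "is_mean {#b#} b"
  unfolding is_mean_def by simp

lemma is_mean_constant:
  assumes "is_mean M b" and "\<forall>x\<in>#M. x = e"
  shows "b = e"
proof
  fix j
  have "size M * b j = (\<Sum>x\<in>#M. e j)"
    using assms unfolding is_mean_def by (simp cong: image_mset_cong)
  then show "b j = e j"
    using assms(1) unfolding is_mean_def by simp
qed

lemma is_mean_image_comp:
  "is_mean M b \<Longrightarrow> is_mean (image_mset (\<lambda>x. x \<circ> \<sigma>) M) (b \<circ> \<sigma>)"
  unfolding is_mean_def by (simp add: image_mset.compositionality o_def)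

lemma sum_mset_repeat_mset: "(\<Sum>x\<in>#repeat_mset k M. f x) = k * (\<Sum>x\<in>#M. f x :: nat)"
  by (induction k) simp_all

lemma set_mset_repeat_mset: "set_mset (repeat_mset k M) = (if k = 0 then {} else set_mset M)"
  by (induction k) auto

lemma is_mean_combination:
  assumes "is_mean M b" and "is_mean N b'" and "size N = size M" and "0 < \<alpha> + \<beta>"
    and "\<And>j. \<alpha> * b j + \<beta> * b' j = (\<alpha> + \<beta>) * c j"
  shows "is_mean (repeat_mset \<alpha> M + repeat_mset \<beta> N) c"
  unfolding is_mean_def
proof (intro conjI allI)
  show "repeat_mset \<alpha> M + repeat_mset \<beta> N \<noteq> {#}"
    using assms(1,2,4) unfolding is_mean_def by (auto simp: repeat_mset_eq_empty_iff)
  fix j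
  have "(\<Sum>x\<in>#repeat_mset \<alpha> M + repeat_mset \<beta> N. x j) = size M * (\<alpha> * b j + \<beta> * b' j)"
    using assms(1-3) unfolding is_mean_def by (simp add: sum_mset_repeat_mset algebra_simps)
  also have "\<dots> = size (repeat_mset \<alpha> M + repeat_mset \<beta> N) * c j"
    using assms(3,5) by (simp add: algebra_simps)
  finally show "(\<Sum>x\<in>#repeat_mset \<alpha> M + repeat_mset \<beta> N. x j) = size (repeat_mset \<alpha> M + repeat_mset \<beta> N) * c j" .
qed

lemma sum_mset_strict_mono:
  assumes "\<And>x. x \<in># M \<Longrightarrow> f x \<le> g x" and "x0 \<in># M" and "f x0 < g x0"
  shows "(\<Sum>x\<in>#M. f x) < (\<Sum>x\<in>#M. g x :: nat)"
proof -
  obtain M' where M: "M = add_mset x0 M'" using multi_member_split[OF assms(2)] by blast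
  have "(\<Sum>x\<in>#M'. f x) \<le> (\<Sum>x\<in>#M'. g x)" by (rule sum_mset_mono) (use assms(1) M in auto)
  then show ?thesis using assms(3) M by simp
qed

text \<open>The neglex down-set of \<open>e\<close> is convex, and \<open>e\<close> is an extreme point of it.\<close>

lemma is_mean_neglex_lt:
  assumes mean: "is_mean M b" and below: "\<forall>x\<in>#M. x = e \<or> neglex_lt x e"
    and "\<exists>x\<in>#M. x \<noteq> e"
  shows "neglex_lt b e"
proof -
  define D where "D = {j. \<exists>x\<in>#M. x j \<noteq> e j}"
  have "D = (\<Union>x\<in>set_mset M. {j. x j \<noteq> e j})" unfolding D_def by blast
  moreover have "finite {j. x j \<noteq> e j}" if "x \<in># M" for x
    using below that neglex_lt_finite_diff by fastforce
  ultimately have "finite D" by simp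
  moreover have "D \<noteq> {}" using assms(3) unfolding D_def by (auto simp: fun_eq_iff)
  ultimately have "Max D \<in> D" by simp
  define K where "K = Max D"
  have K_max: "j \<le> K" if "j \<in> D" for j using \<open>finite D\<close> that unfolding K_def by simp
  have above: "x j = e j" if "x \<in># M" "K < j" for x j
    using K_max[of j] that unfolding D_def by fastforce
  have le: "x K \<le> e K" if x: "x \<in># M" for x
  proof (cases "x = e")
    case False
    then obtain k where k: "x k < e k" "\<forall>j>k. x j = e j"
      using below x unfolding neglex_lt_def by blast
    have "x k \<noteq> e k" using k(1) by simp
    then have "k \<in> D" unfolding D_def using x by blast
    then have "k \<le> K" by (rule K_max)
    then show ?thesis using k by (cases "k = K") auto
  qed simp
  obtain x0 where x0: "x0 \<in># M" "x0 K \<noteq> e K" using \<open>Max D \<in> D\<close> unfolding K_def D_def by blast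
  have "x0 K < e K" using le[OF x0(1)] x0(2) by simp
  then have "(\<Sum>x\<in>#M. x K) < (\<Sum>x\<in>#M. e K)"
    using sum_mset_strict_mono[of M "\<lambda>x. x K" "\<lambda>_. e K" x0] le x0(1) by blast
  then have "size M * b K < size M * e K" using mean by (simp add: is_mean_def)
  moreover have "b j = e j" if "K < j" for j
  proof -
    have "(\<Sum>x\<in>#M. x j) = (\<Sum>x\<in>#M. e j)" using above[OF _ that] by (simp cong: image_mset_cong)
    then show ?thesis using mean unfolding is_mean_def by simp
  qed
  ultimately show ?thesis unfolding neglex_lt_def using mean by (auto simp: is_mean_def)
qed

lemma nat_interpolation_weights:
  fixes u v \<gamma> :: nat
  assumes "min u v < \<gamma>" and "\<gamma> \<le> max u v"
  obtains \<alpha> \<beta> where "0 < \<alpha> + \<beta>" and "\<alpha> * v + \<beta> * u = (\<alpha> + \<beta>) * \<gamma>"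
    and "\<alpha> * u + \<beta> * v = (\<alpha> + \<beta>) * (u + v - \<gamma>)"
proof (cases "v < u")
  case True
  then have "v < \<gamma>" "\<gamma> \<le> u" using assms by auto
  then obtain p q where "u = \<gamma> + p" "\<gamma> = Suc (v + q)" by (auto simp: le_iff_add dest!: less_imp_Suc_add)
  then show ?thesis by (intro that[of p "Suc q"]) (simp_all add: algebra_simps)
next
  case False
  then have "u < \<gamma>" "\<gamma> \<le> v" using assms by auto
  then obtain p q where "v = \<gamma> + p" "\<gamma> = Suc (u + q)" by (auto simp: le_iff_add dest!: less_imp_Suc_add)
  then show ?thesis by (intro that[of "Suc q" p]) (simp_all add: algebra_simps)
qed

section \<open>Domination of suffix ranks\<close>

definition suffix_rank :: "nat \<Rightarrow> (nat \<Rightarrow> nat) \<Rightarrow> nat \<Rightarrow> nat \<Rightarrow> nat" where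
  "suffix_rank n x k t = card {j \<in> {k..n}. t \<le> x j}"

definition dominated :: "nat \<Rightarrow> (nat \<Rightarrow> nat) \<Rightarrow> (nat \<Rightarrow> nat) \<Rightarrow> bool" where
  "dominated n e x \<longleftrightarrow>
    (\<forall>j. j \<notin> {1..n} \<longrightarrow> x j = 0) \<and> (\<forall>k t. suffix_rank n x k t \<le> suffix_rank n e k t)"

lemma suffix_rank_Suc:
  "k \<le> n \<Longrightarrow> suffix_rank n x k t = of_bool (t \<le> x k) + suffix_rank n x (Suc k) t"
proof -
  assume "k \<le> n"
  then have "{j \<in> {k..n}. t \<le> x j} = (if t \<le> x k then insert k else id) {j \<in> {Suc k..n}. t \<le> x j}"
    by (auto simp: Suc_le_eq le_less)
  then show ?thesis unfolding suffix_rank_def by simp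
qed

lemma suffix_rank_cong: "(\<And>j. k \<le> j \<Longrightarrow> x j = y j) \<Longrightarrow> suffix_rank n x k t = suffix_rank n y k t"
  unfolding suffix_rank_def by (intro arg_cong[where f = card]) auto

lemma s_apply: "s i j = (if j = i then i + 1 else if j = i + 1 then i else j)"
  unfolding s_def transpose_def by simp

lemma inv_s [simp]: "inv (s i) = s i"
  unfolding s_def by simp

lemma bij_s: "bij (s i)"
  unfolding s_def by simp

lemma comp_s_comp_s [simp]: "x \<circ> s i \<circ> s i = x"
  unfolding s_def by (simp add: fun_eq_iff)

lemma comp_s_eq_iff: "x \<circ> s i = y \<circ> s i \<longleftrightarrow> x = y"
  by (metis comp_s_comp_s)

lemma suffix_rank_comp_s_low:
  assumes "k \<le> i" "i < n"
  shows "suffix_rank n (x \<circ> s i) k t = suffix_rank n x k t"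
proof -
  have "{j \<in> {k..n}. t \<le> (x \<circ> s i) j} = s i ` {j \<in> {k..n}. t \<le> x j}"
    using assms by (auto simp: s_apply image_iff)
  moreover have "inj (s i)" using bij_s by (rule bij_is_inj)
  ultimately show ?thesis unfolding suffix_rank_def by (simp add: card_image inj_on_subset)
qed

lemma suffix_rank_comp_s_high:
  "i + 2 \<le> k \<Longrightarrow> suffix_rank n (x \<circ> s i) k t = suffix_rank n x k t"
  by (rule suffix_rank_cong) (simp add: s_apply)

lemma suffix_rank_comp_s_mid:
  "i < n \<Longrightarrow> suffix_rank n (x \<circ> s i) (i + 1) t = of_bool (t \<le> x i) + suffix_rank n x (i + 2) t"
  using suffix_rank_Suc[of "i + 1" n "x \<circ> s i" t] suffix_rank_comp_s_high[of i "i + 2" n x t]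
  by (simp add: s_apply)

lemma dominated_refl: "(\<forall>j. j \<notin> {1..n} \<longrightarrow> e j = 0) \<Longrightarrow> dominated n e e"
  unfolding dominated_def by simp

lemma dominated_neglex_le:
  assumes "dominated n e x" and "\<forall>j. j \<notin> {1..n} \<longrightarrow> e j = 0"
  shows "x = e \<or> neglex_lt x e"
proof (cases "x = e")
  case False
  have diff: "{j. x j \<noteq> e j} \<subseteq> {1..n}"
  proof
    fix j assume "j \<in> {j. x j \<noteq> e j}"
    then show "j \<in> {1..n}" using assms unfolding dominated_def by (cases "j \<in> {1..n}") auto
  qed
  then obtain K where K: "x K \<noteq> e K" "\<And>j. K < j \<Longrightarrow> x j = e j"
    using last_difference[OF finite_subset[OF _ finite_atLeastAtMost] False] by blast
  have "K \<le> n" using diff K(1) by auto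
  have tails: "suffix_rank n x (Suc K) t = suffix_rank n e (Suc K) t" for t
    by (rule suffix_rank_cong) (simp add: K(2))
  have "suffix_rank n x K (x K) \<le> suffix_rank n e K (x K)"
    using assms(1) unfolding dominated_def by blast
  then have "x K \<le> e K"
    using suffix_rank_Suc[OF \<open>K \<le> n\<close>] tails by (simp add: of_bool_def split: if_splits)
  then have "neglex_lt x e" unfolding neglex_lt_def using K by (intro exI[of _ K]) simp
  then show ?thesis ..
qed simp

lemma dominated_comp_s_target:
  assumes "dominated n e x" and "i < n" and "e (i + 1) < e i"
  shows "dominated n (e \<circ> s i) x"
  unfolding dominated_def
proof (intro conjI allI)
  show "\<And>j. j \<notin> {1..n} \<longrightarrow> x j = 0" using assms(1) unfolding dominated_def by blast
  fix k t
  have xe: "suffix_rank n x k t \<le> suffix_rank n e k t" using assms(1) unfolding dominated_def by blast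
  consider "k \<le> i" | "k = i + 1" | "i + 2 \<le> k" by linarith
  then show "suffix_rank n x k t \<le> suffix_rank n (e \<circ> s i) k t"
  proof cases
    case 2
    have "suffix_rank n e (i + 1) t \<le> of_bool (t \<le> e i) + suffix_rank n e (i + 2) t"
      using suffix_rank_Suc[of "i + 1" n e t] assms(2,3) by auto
    then show ?thesis using xe 2 suffix_rank_comp_s_mid[OF assms(2), of e t] by simp
  qed (use xe suffix_rank_comp_s_low[OF _ assms(2)] suffix_rank_comp_s_high in auto)
qed

lemma dominated_comp_s:
  assumes "dominated n e x" and "1 \<le> i" "i < n" and "e (i + 1) < e i"
  shows "dominated n (e \<circ> s i) (x \<circ> s i)"
  unfolding dominated_def
proof (intro conjI allI)
  show "\<And>j. j \<notin> {1..n} \<longrightarrow> (x \<circ> s i) j = 0"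
    using assms(1-3) unfolding dominated_def by (auto simp: s_apply)
  fix k t
  have xe: "\<And>k. suffix_rank n x k t \<le> suffix_rank n e k t" using assms(1) unfolding dominated_def by blast
  consider "k \<le> i" | "k = i + 1" | "i + 2 \<le> k" by linarith
  then show "suffix_rank n (x \<circ> s i) k t \<le> suffix_rank n (e \<circ> s i) k t"
  proof cases
    case 2
    have split: "suffix_rank n y i t = of_bool (t \<le> y i) + of_bool (t \<le> y (i + 1)) + suffix_rank n y (i + 2) t"
      for y using suffix_rank_Suc[of i n y t] suffix_rank_Suc[of "i + 1" n y t] assms(3) by simp
    have "of_bool (t \<le> x i) + suffix_rank n x (i + 2) t \<le> of_bool (t \<le> e i) + suffix_rank n e (i + 2) t"
    proof (cases "t \<le> e i")
      case False
      then show ?thesis using xe[of i] split[of x] split[of e] assms(4) by simp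
    qed (use xe[of "i + 2"] in simp)
    then show ?thesis using 2 suffix_rank_comp_s_mid[OF assms(3)] by simp
  qed (use xe suffix_rank_comp_s_low[OF _ assms(3)] suffix_rank_comp_s_high in auto)
qed

lemma mean_of_neglex_le:
  assumes "mean_of A b" and "\<forall>x\<in>A. x = e \<or> neglex_lt x e"
  shows "b = e \<or> neglex_lt b e"
proof -
  obtain M where M: "set_mset M \<subseteq> A" "is_mean M b" using assms(1) unfolding mean_of_def by blast
  show ?thesis
  proof (cases "\<forall>x\<in>#M. x = e")
    case True
    then show ?thesis using is_mean_constant[OF M(2)] by blast
  next
    case False
    then show ?thesis using is_mean_neglex_lt[OF M(2)] M(1) assms(2) by blast
  qed
qed

lemma neglex_lt_comp_s: "e (i + 1) < e i \<Longrightarrow> neglex_lt e (e \<circ> s i)"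
  unfolding neglex_lt_def by (intro exI[of _ "i + 1"]) (simp add: s_apply)

lemma is_mean_dominated_interpolation:
  assumes M: "set_mset M \<subseteq> {x. dominated n e x}" "is_mean M b"
    and i: "1 \<le> i" "i < n" and desc: "e (i + 1) < e i"
    and \<gamma>: "min (b i) (b (i + 1)) < \<gamma>" "\<gamma> \<le> max (b i) (b (i + 1))"
  obtains M' where "set_mset M' \<subseteq> {x. dominated n (e \<circ> s i) x}"
    and "is_mean M' (b(i := b i + b (i + 1) - \<gamma>, i + 1 := \<gamma>))"
    and "set_mset M \<subseteq> set_mset M' \<or> (\<lambda>x. x \<circ> s i) ` set_mset M \<subseteq> set_mset M'"
proof -
  obtain \<alpha> \<beta> where \<alpha>\<beta>: "0 < \<alpha> + \<beta>" "\<alpha> * b (i + 1) + \<beta> * b i = (\<alpha> + \<beta>) * \<gamma>"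
    "\<alpha> * b i + \<beta> * b (i + 1) = (\<alpha> + \<beta>) * (b i + b (i + 1) - \<gamma>)"
    using nat_interpolation_weights[OF \<gamma>] by blast
  define M' where "M' = repeat_mset \<alpha> M + repeat_mset \<beta> (image_mset (\<lambda>x. x \<circ> s i) M)"
  have "\<alpha> * b j + \<beta> * (b \<circ> s i) j = (\<alpha> + \<beta>) * (b(i := b i + b (i + 1) - \<gamma>, i + 1 := \<gamma>)) j" for j
    using \<alpha>\<beta>(2,3) by (auto simp: s_apply add_mult_distrib)
  then have "is_mean M' (b(i := b i + b (i + 1) - \<gamma>, i + 1 := \<gamma>))"
    unfolding M'_def using \<alpha>\<beta>(1) by (intro is_mean_combination[OF M(2) is_mean_image_comp[OF M(2)]]) auto
  moreover have "set_mset M' \<subseteq> {x. dominated n (e \<circ> s i) x}"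
    using M(1) dominated_comp_s_target[OF _ i(2) desc] dominated_comp_s[OF _ i desc]
    unfolding M'_def by (auto simp: set_mset_repeat_mset)
  moreover have "set_mset M \<subseteq> set_mset M' \<or> (\<lambda>x. x \<circ> s i) ` set_mset M \<subseteq> set_mset M'"
    using \<alpha>\<beta>(1) unfolding M'_def by (auto simp: set_mset_repeat_mset)
  ultimately show ?thesis using that by blast
qed

lemma mean_of_dominated_step:
  assumes b: "mean_of {x. dominated n e x} b"
    and i: "1 \<le> i" "i < n" and desc: "e (i + 1) < e i"
    and e: "\<forall>j. j \<notin> {1..n} \<longrightarrow> e j = 0"
    and \<gamma>: "min (b i) (b (i + 1)) < \<gamma>" "\<gamma> \<le> max (b i) (b (i + 1))"
  defines "c \<equiv> b(i := b i + b (i + 1) - \<gamma>, i + 1 := \<gamma>)"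
  shows "mean_of {x. dominated n (e \<circ> s i) x} c" and "b \<noteq> e \<Longrightarrow> c \<noteq> e \<circ> s i"
proof -
  obtain M where M: "set_mset M \<subseteq> {x. dominated n e x}" "is_mean M b"
    using b unfolding mean_of_def by blast
  obtain M' where M': "set_mset M' \<subseteq> {x. dominated n (e \<circ> s i) x}" "is_mean M' c"
    "set_mset M \<subseteq> set_mset M' \<or> (\<lambda>x. x \<circ> s i) ` set_mset M \<subseteq> set_mset M'"
    using is_mean_dominated_interpolation[OF M i desc \<gamma>] unfolding c_def by blast
  then show "mean_of {x. dominated n (e \<circ> s i) x} c" unfolding mean_of_def by blast
  assume "b \<noteq> e"
  show "c \<noteq> e \<circ> s i"
  proof
    assume c: "c = e \<circ> s i"
    have "\<forall>j. j \<notin> {1..n} \<longrightarrow> (e \<circ> s i) j = 0" using e i by (auto simp: s_apply)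
    then have "\<forall>x\<in>#M'. x = e \<circ> s i \<or> neglex_lt x (e \<circ> s i)"
      using M'(1) dominated_neglex_le by blast
    then have "\<forall>x\<in>#M'. x = e \<circ> s i" using is_mean_neglex_lt[OF M'(2)] c neglex_lt_irrefl by blast
    then have "(\<forall>x\<in>#M. x = e \<circ> s i) \<or> (\<forall>x\<in>#M. x \<circ> s i = e \<circ> s i)" using M'(3) by blast
    then have "(\<forall>x\<in>#M. x = e \<circ> s i) \<or> (\<forall>x\<in>#M. x = e)" by (simp only: comp_s_eq_iff)
    then have "b = e \<circ> s i \<or> b = e" using is_mean_constant[OF M(2)] by blast
    moreover have "b = e \<or> neglex_lt b e" using mean_of_neglex_le[OF b] dominated_neglex_le[OF _ e] by blast
    ultimately show False
      using \<open>b \<noteq> e\<close> neglex_lt_comp_s[OF desc] neglex_lt_asym by blast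
  qed
qed

section \<open>Inversions and reduced words\<close>

definition inversions :: "nat \<Rightarrow> (nat \<Rightarrow> nat) \<Rightarrow> (nat \<times> nat) set" where
  "inversions n x = {(a, b). 1 \<le> a \<and> a < b \<and> b \<le> n \<and> x b < x a}"

lemma inv_count_eq_card_inversions: "inv_count n x = card (inversions n x)"
  unfolding inv_count_def inversions_def by simp

lemma finite_inversions: "finite (inversions n x)"
  by (rule finite_subset[of _ "{1..n} \<times> {1..n}"]) (auto simp: inversions_def)

lemma inversions_id: "inversions n id = {}"
  unfolding inversions_def by auto

lemma word_perm_Cons [simp]: "word_perm (i # is) = s i \<circ> word_perm is"
  unfolding word_perm_def by simp

lemma word_perm_append: "word_perm (is @ js) = word_perm is \<circ> word_perm js"
  by (induction "is") (auto simp: word_perm_def)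

lemma s_permutes: "1 \<le> i \<Longrightarrow> i < n \<Longrightarrow> s i permutes {1..n}"
  unfolding s_def by (rule permutes_swap_id) auto

lemma word_perm_permutes: "\<forall>i\<in>set is. 1 \<le> i \<and> i < n \<Longrightarrow> word_perm is permutes {1..n}"
proof (induction "is")
  case (Cons i "is")
  then have "word_perm is permutes {1..n}" by simp
  moreover have "1 \<le> i" "i < n" using Cons.prems by auto
  then have "s i permutes {1..n}" by (rule s_permutes)
  ultimately show ?case unfolding word_perm_Cons by (rule permutes_compose)
qed (simp add: word_perm_def permutes_id)

lemma s_less_s_iff: "y \<noteq> z \<Longrightarrow> s i z < s i y \<longleftrightarrow> (z < y \<longleftrightarrow> {y, z} \<noteq> {i, i + 1})"
  unfolding s_def transpose_def by auto

lemma mem_inversions_s_comp: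
  assumes x: "x permutes {1..n}"
  shows "(a, b) \<in> inversions n (s i \<circ> x) \<longleftrightarrow>
    1 \<le> a \<and> a < b \<and> b \<le> n \<and>
    (x b < x a \<longleftrightarrow> (a, b) \<notin> {(inv x i, inv x (i + 1)), (inv x (i + 1), inv x i)})"
proof (cases "a < b")
  case True
  then have "x a \<noteq> x b" using permutes_inj[OF x] by (metis injD less_irrefl)
  have xinv: "x c = y \<longleftrightarrow> c = inv x y" for c y by (metis permutes_inv_eq[OF x])
  have "{x a, x b} = {i, i + 1} \<longleftrightarrow> (a, b) \<in> {(inv x i, inv x (i + 1)), (inv x (i + 1), inv x i)}"
    unfolding doubleton_eq_iff xinv by simp
  then show ?thesis
    unfolding inversions_def using True s_less_s_iff[OF \<open>x a \<noteq> x b\<close>, of i] by auto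
qed (auto simp: inversions_def)

lemma inversions_s_comp:
  assumes x: "x permutes {1..n}" and i: "1 \<le> i" "i < n"
  defines "p \<equiv> inv x i" and "q \<equiv> inv x (i + 1)"
  shows "p < q \<Longrightarrow> inversions n (s i \<circ> x) = insert (p, q) (inversions n x) \<and> (p, q) \<notin> inversions n x"
    and "q < p \<Longrightarrow> inversions n (s i \<circ> x) = inversions n x - {(q, p)} \<and> (q, p) \<in> inversions n x"
proof -
  have xpq: "x p = i" "x q = i + 1" unfolding p_def q_def using permutes_inverses(1)[OF x] by auto
  have pq: "p \<in> {1..n}" "q \<in> {1..n}"
    unfolding p_def q_def using permutes_in_image[OF permutes_inv[OF x]] i by auto
  note mem = mem_inversions_s_comp[OF x, of _ _ i, folded p_def q_def]
  show "p < q \<Longrightarrow> inversions n (s i \<circ> x) = insert (p, q) (inversions n x) \<and> (p, q) \<notin> inversions n x"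
    using xpq pq by (auto simp: set_eq_iff mem) (auto simp: inversions_def)
  show "q < p \<Longrightarrow> inversions n (s i \<circ> x) = inversions n x - {(q, p)} \<and> (q, p) \<in> inversions n x"
    using xpq pq by (auto simp: set_eq_iff mem) (auto simp: inversions_def)
qed

lemma card_inversions_s_comp:
  assumes x: "x permutes {1..n}" and i: "1 \<le> i" "i < n"
  shows "card (inversions n (s i \<circ> x)) \<le> card (inversions n x) + 1"
    and "card (inversions n (s i \<circ> x)) = card (inversions n x) + 1 \<Longrightarrow>
      inv x i < inv x (i + 1) \<and> inversions n x \<subseteq> inversions n (s i \<circ> x)"
proof -
  have "inv x i \<noteq> inv x (i + 1)" by (metis permutes_inverses(1)[OF x] n_not_Suc_n Suc_eq_plus1)
  then consider "inv x i < inv x (i + 1)" | "inv x (i + 1) < inv x i" by linarith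
  then have "(card (inversions n (s i \<circ> x)) = card (inversions n x) + 1 \<and> inv x i < inv x (i + 1)
      \<and> inversions n x \<subseteq> inversions n (s i \<circ> x))
    \<or> card (inversions n (s i \<circ> x)) = card (inversions n x) - 1"
  proof cases
    case 1
    then show ?thesis using inversions_s_comp(1)[OF x i 1] finite_inversions by auto
  next
    case 2
    then show ?thesis using inversions_s_comp(2)[OF x i 2] by (simp add: card_Diff_singleton)
  qed
  then show "card (inversions n (s i \<circ> x)) \<le> card (inversions n x) + 1"
    and "card (inversions n (s i \<circ> x)) = card (inversions n x) + 1 \<Longrightarrow>
      inv x i < inv x (i + 1) \<and> inversions n x \<subseteq> inversions n (s i \<circ> x)"
    by linarith+
qed

lemma card_inversions_word_perm:
  assumes "\<forall>i\<in>set is. 1 \<le> i \<and> i < n" and y: "y permutes {1..n}"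
  shows "card (inversions n (word_perm is \<circ> y)) \<le> length is + card (inversions n y) \<and>
    (card (inversions n (word_perm is \<circ> y)) = length is + card (inversions n y) \<longrightarrow>
      inversions n y \<subseteq> inversions n (word_perm is \<circ> y))"
  using assms(1)
proof (induction "is")
  case (Cons i "is")
  let ?z = "word_perm is \<circ> y"
  have i: "1 \<le> i" "i < n" using Cons.prems by auto
  have "?z permutes {1..n}"
    using word_perm_permutes Cons.prems y by (auto intro: permutes_compose)
  note step = card_inversions_s_comp[OF this i]
  have "\<forall>j\<in>set is. 1 \<le> j \<and> j < n" using Cons.prems by simp
  then obtain IH1: "card (inversions n ?z) \<le> length is + card (inversions n y)"
    and IH2: "card (inversions n ?z) = length is + card (inversions n y) \<Longrightarrow>
      inversions n y \<subseteq> inversions n ?z"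
    using Cons.IH by blast
  have eq: "word_perm (i # is) \<circ> y = s i \<circ> ?z" by (simp add: o_assoc)
  show ?case unfolding eq length_Cons
  proof (intro conjI impI)
    show "card (inversions n (s i \<circ> ?z)) \<le> Suc (length is) + card (inversions n y)"
      using IH1 step(1) by linarith
    assume "card (inversions n (s i \<circ> ?z)) = Suc (length is) + card (inversions n y)"
    then have "card (inversions n (s i \<circ> ?z)) = card (inversions n ?z) + 1"
      and "card (inversions n ?z) = length is + card (inversions n y)"
      using IH1 step(1) by linarith+
    then show "inversions n y \<subseteq> inversions n (s i \<circ> ?z)" using IH2 step(2) by blast
  qed
qed (simp add: word_perm_def)

lemma reduced_word_letter:
  assumes "reduced_word n w (pre @ i # suf)"
  defines "v \<equiv> word_perm suf"
  shows "1 \<le> i" and "i < n" and "inv v i < inv v (i + 1)"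
    and "inversions n (s i \<circ> v) \<subseteq> inversions n w"
proof -
  have letters: "\<forall>j\<in>set (pre @ i # suf). 1 \<le> j \<and> j < n"
    and w: "w = word_perm pre \<circ> (s i \<circ> v)"
    and len: "length pre + length suf + 1 = card (inversions n w)"
    using assms unfolding reduced_word_def inv_count_eq_card_inversions
    by (auto simp: word_perm_append o_assoc)
  show i: "1 \<le> i" "i < n" using letters by auto
  have v: "v permutes {1..n}" "card (inversions n v) \<le> length suf"
    using card_inversions_word_perm[of suf n id] word_perm_permutes[of suf n] letters
    unfolding v_def by (auto simp: inversions_id permutes_id)
  have sv: "s i \<circ> v permutes {1..n}" using permutes_compose[OF v(1) s_permutes[OF i]] .
  note pre = card_inversions_word_perm[of pre n "s i \<circ> v", OF _ sv, folded w]
  note step = card_inversions_s_comp[OF v(1) i]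
  have "card (inversions n (s i \<circ> v)) = card (inversions n v) + 1"
    and "card (inversions n w) = length pre + card (inversions n (s i \<circ> v))"
    using pre step(1) v(2) len letters by auto
  then show "inv v i < inv v (i + 1)" and "inversions n (s i \<circ> v) \<subseteq> inversions n w"
    using pre step(2) letters by auto
qed

lemma descent_between:
  fixes w :: "nat \<Rightarrow> nat"
  assumes "p \<le> q" and "w q < w p"
  shows "\<exists>j. p \<le> j \<and> j < q \<and> w (j + 1) < w j"
  using assms
proof (induction q rule: dec_induct)
  case (step q)
  show ?case
  proof (cases "w (Suc q) < w q")
    case False
    then have "w q < w p" using step.prems by simp
    then obtain j where "p \<le> j" "j < q" "w (j + 1) < w j" using step.IH by blast
    then show ?thesis by (intro exI[of _ j]) simp
  qed (use step.hyps in auto)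
qed simp

text \<open>Each letter of a reduced word for \<open>w\<close> swaps two entries that \<open>w\<close> keeps inverted; as
  \<open>Des(w) \<subseteq> Des(d)\<close>, the entries of \<open>d\<close> at these positions are separated by a strict descent.\<close>

lemma reduced_word_letter_descent:
  assumes dec: "\<And>i j. 1 \<le> i \<Longrightarrow> i \<le> j \<Longrightarrow> j \<le> n \<Longrightarrow> d j \<le> d i"
    and des: "Des_perm n w \<subseteq> Des_seq n d"
    and red: "reduced_word n w (pre @ i # suf)"
  defines "v \<equiv> word_perm suf"
  shows "d (inv v (i + 1)) < d (inv v i)"
proof -
  note letter = reduced_word_letter[OF red, folded v_def]
  have "\<forall>j\<in>set suf. 1 \<le> j \<and> j < n" using red unfolding reduced_word_def by simp
  then have v: "v permutes {1..n}" unfolding v_def by (rule word_perm_permutes)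
  define p where "p = inv v i"
  define q where "q = inv v (i + 1)"
  have "p \<in> {1..n}" "q \<in> {1..n}"
    unfolding p_def q_def using permutes_in_image[OF permutes_inv[OF v]] letter(1,2) by simp_all
  moreover have "p < q" unfolding p_def q_def by (rule letter(3))
  moreover have "v p = i" "v q = i + 1" unfolding p_def q_def using permutes_inverses(1)[OF v] by simp_all
  ultimately have "(p, q) \<in> inversions n (s i \<circ> v)" unfolding inversions_def by (simp add: s_apply)
  then have "(p, q) \<in> inversions n w" using letter(4) by blast
  then have pq: "1 \<le> p" "p < q" "q \<le> n" "w q < w p" unfolding inversions_def by simp_all
  then obtain j where j: "p \<le> j" "j < q" "w (j + 1) < w j"
    using descent_between[of p q w] by auto
  then have "j \<in> Des_perm n w" using pq unfolding Des_perm_def by simp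
  then have "d (j + 1) < d j" using des unfolding Des_seq_def by blast
  moreover have "d j \<le> d p" using dec[of p j] j pq by simp
  moreover have "d q \<le> d (j + 1)" using dec[of "j + 1" q] j pq by simp
  ultimately show ?thesis unfolding p_def q_def by linarith
qed

section \<open>The isobaric divided differences on monomials\<close>

lemma var_pow: "(var i :: 'a::field mpoly) ^ k = Poly_Mapping.single (Poly_Mapping.single i k) 1"
  by (induction k) (simp_all add: var_def mult_single single_add[symmetric])

definition xpow_exp :: "nat \<Rightarrow> (nat \<Rightarrow> nat) \<Rightarrow> (nat \<Rightarrow>\<^sub>0 nat)" where
  "xpow_exp n d = (\<Sum>i\<in>{1..n}. Poly_Mapping.single i (d i))"

lemma lookup_xpow_exp: "Poly_Mapping.lookup (xpow_exp n d) j = (if j \<in> {1..n} then d j else 0)"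
  unfolding xpow_exp_def by (simp add: lookup_sum lookup_single when_def)

lemma xpow_eq_single: "(xpow n d :: 'a::field mpoly) = Poly_Mapping.single (xpow_exp n d) 1"
proof -
  have "(\<Prod>i\<in>I. Poly_Mapping.single (Poly_Mapping.single i (d i)) (1::'a)) =
      Poly_Mapping.single (\<Sum>i\<in>I. Poly_Mapping.single i (d i)) 1" if "finite I" for I
    using that by (induction I rule: finite_induct) (simp_all add: mult_single)
  then show ?thesis unfolding xpow_def xpow_exp_def by (simp add: var_pow)
qed

lemma lookup_perm_mono:
  assumes "bij w"
  shows "Poly_Mapping.lookup (perm_mono w m) = Poly_Mapping.lookup m \<circ> inv w"
proof
  fix x
  have "w j = x \<longleftrightarrow> j = inv w x" for j using assms by (metis bij_inv_eq_iff)
  then have "Poly_Mapping.lookup (perm_mono w m) x =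
      (\<Sum>j\<in>Poly_Mapping.keys m. if j = inv w x then Poly_Mapping.lookup m j else 0)"
    unfolding perm_mono_def by (simp add: lookup_sum lookup_single when_def)
  also have "\<dots> = (Poly_Mapping.lookup m \<circ> inv w) x" by (simp add: in_keys_iff)
  finally show "Poly_Mapping.lookup (perm_mono w m) x = (Poly_Mapping.lookup m \<circ> inv w) x" .
qed

lemma perm_poly_single:
  "perm_poly w (Poly_Mapping.single m c) = Poly_Mapping.single (perm_mono w m) (c :: 'a::field)"
  unfolding perm_poly_def by (cases "c = 0") auto

definition upd_pair :: "nat \<Rightarrow> (nat \<Rightarrow>\<^sub>0 nat) \<Rightarrow> nat \<Rightarrow> nat \<Rightarrow> (nat \<Rightarrow>\<^sub>0 nat)" where
  "upd_pair i m \<alpha> \<beta> = Poly_Mapping.update (i + 1) \<beta> (Poly_Mapping.update i \<alpha> m)"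

lemma lookup_upd_pair:
  "Poly_Mapping.lookup (upd_pair i m \<alpha> \<beta>) = (Poly_Mapping.lookup m)(i := \<alpha>, i + 1 := \<beta>)"
  unfolding upd_pair_def by (auto simp: lookup_update)

lemma upd_pair_eq_iff: "upd_pair i m \<alpha> \<beta> = upd_pair i m \<alpha>' \<beta>' \<longleftrightarrow> \<alpha> = \<alpha>' \<and> \<beta> = \<beta>'"
proof
  assume "upd_pair i m \<alpha> \<beta> = upd_pair i m \<alpha>' \<beta>'"
  then have "Poly_Mapping.lookup (upd_pair i m \<alpha> \<beta>) j = Poly_Mapping.lookup (upd_pair i m \<alpha>' \<beta>') j" for j
    by simp
  from this[of i] this[of "i + 1"] show "\<alpha> = \<alpha>' \<and> \<beta> = \<beta>'" by (simp add: lookup_upd_pair)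
qed simp

lemma upd_pair_self: "upd_pair i m (Poly_Mapping.lookup m i) (Poly_Mapping.lookup m (i + 1)) = m"
  by (simp add: poly_mapping_eq_iff lookup_upd_pair)

lemma perm_mono_s: "perm_mono (s i) m = upd_pair i m (Poly_Mapping.lookup m (i + 1)) (Poly_Mapping.lookup m i)"
  by (simp add: poly_mapping_eq_iff lookup_perm_mono[OF bij_s] lookup_upd_pair fun_eq_iff s_apply)

lemma single_add_upd_pair:
  "Poly_Mapping.single i 1 + upd_pair i m \<alpha> \<beta> = upd_pair i m (Suc \<alpha>) \<beta>"
  "Poly_Mapping.single (i + 1) 1 + upd_pair i m \<alpha> \<beta> = upd_pair i m \<alpha> (Suc \<beta>)"
  by (rule poly_mapping_eqI; simp add: lookup_add lookup_upd_pair lookup_single when_def)+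

lemma var_mult_upd_pair:
  "var i * Poly_Mapping.single (upd_pair i m \<alpha> \<beta>) c = Poly_Mapping.single (upd_pair i m (Suc \<alpha>) \<beta>) (c :: 'a::field)"
  "var (i + 1) * Poly_Mapping.single (upd_pair i m \<alpha> \<beta>) c = Poly_Mapping.single (upd_pair i m \<alpha> (Suc \<beta>)) c"
  by (simp_all only: var_def mult_single single_add_upd_pair mult_1)

text \<open>The explicit quotient \<open>x\<^sub>i\<^sub>+\<^sub>1 (x\<^sup>m - s\<^sub>i x\<^sup>m) / (x\<^sub>i - x\<^sub>i\<^sub>+\<^sub>1)\<close>: a signed sum of the monomials on the
  segment between \<open>m\<close> and \<open>s\<^sub>i m\<close>, excluding \<open>m\<close> and including \<open>s\<^sub>i m\<close>.\<close>

definition pibar_monomial :: "nat \<Rightarrow> (nat \<Rightarrow>\<^sub>0 nat) \<Rightarrow> 'a::field mpoly" where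
  "pibar_monomial i m = (let a = Poly_Mapping.lookup m i; b = Poly_Mapping.lookup m (i + 1) in
     if b \<le> a then (\<Sum>\<gamma>\<in>{b<..a}. Poly_Mapping.single (upd_pair i m (a + b - \<gamma>) \<gamma>) 1)
     else - (\<Sum>\<gamma>\<in>{a<..b}. Poly_Mapping.single (upd_pair i m (a + b - \<gamma>) \<gamma>) 1))"

lemma var_diff_mult_segment:
  assumes "p \<le> q"
  shows "(var i - var (i + 1)) * (\<Sum>\<gamma>\<in>{p<..q}. Poly_Mapping.single (upd_pair i m (p + q - \<gamma>) \<gamma>) 1) =
    Poly_Mapping.single (upd_pair i m q (Suc p)) 1 - (Poly_Mapping.single (upd_pair i m p (Suc q)) 1 :: 'a::field mpoly)"
proof -
  define F :: "nat \<Rightarrow> 'a mpoly" where "F \<gamma> = Poly_Mapping.single (upd_pair i m (Suc (p + q) - \<gamma>) \<gamma>) 1" for \<gamma>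
  have "(var i - var (i + 1)) * Poly_Mapping.single (upd_pair i m (p + q - \<gamma>) \<gamma>) 1 = F \<gamma> - F (Suc \<gamma>)"
    if "\<gamma> \<in> {p<..q}" for \<gamma>
    using that unfolding F_def left_diff_distrib var_mult_upd_pair by (simp add: Suc_diff_le)
  then have "(var i - var (i + 1)) * (\<Sum>\<gamma>\<in>{p<..q}. Poly_Mapping.single (upd_pair i m (p + q - \<gamma>) \<gamma>) 1) =
      (\<Sum>\<gamma>\<in>{Suc p..<Suc q}. F \<gamma> - F (Suc \<gamma>))"
    unfolding sum_distrib_left by (intro sum.cong) auto
  also have "\<dots> = F (Suc p) - F (Suc q)"
    using sum_Suc_diff'[of "Suc p" "Suc q" "\<lambda>\<gamma>. - F \<gamma>"] assms by simp
  finally show ?thesis unfolding F_def by simp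
qed

lemma var_diff_mult_pibar_monomial:
  "(var i - var (i + 1)) * (pibar_monomial i m :: 'a::field mpoly) =
    var (i + 1) * (Poly_Mapping.single m 1 - Poly_Mapping.single (perm_mono (s i) m) 1)"
proof -
  define a where "a = Poly_Mapping.lookup m i"
  define b where "b = Poly_Mapping.lookup m (i + 1)"
  have "var (i + 1) * (Poly_Mapping.single m 1 - Poly_Mapping.single (perm_mono (s i) m) 1) =
      Poly_Mapping.single (upd_pair i m a (Suc b)) 1 - (Poly_Mapping.single (upd_pair i m b (Suc a)) 1 :: 'a mpoly)"
    unfolding perm_mono_s right_diff_distrib
    by (subst (1) upd_pair_self[of i m, symmetric]) (simp only: var_mult_upd_pair a_def b_def)
  moreover have "(var i - var (i + 1)) * (pibar_monomial i m :: 'a mpoly) =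
      Poly_Mapping.single (upd_pair i m a (Suc b)) 1 - Poly_Mapping.single (upd_pair i m b (Suc a)) 1"
  proof (cases "b \<le> a")
    case True
    then show ?thesis using var_diff_mult_segment[of b a i m, where 'a = 'a]
      unfolding pibar_monomial_def a_def[symmetric] b_def[symmetric] Let_def by (simp add: add.commute)
  next
    case False
    then have "(var i - var (i + 1)) * (pibar_monomial i m :: 'a mpoly) =
        - ((var i - var (i + 1)) * (\<Sum>\<gamma>\<in>{a<..b}. Poly_Mapping.single (upd_pair i m (a + b - \<gamma>) \<gamma>) 1))"
      unfolding pibar_monomial_def a_def[symmetric] b_def[symmetric] Let_def by simp
    also have "\<dots> = Poly_Mapping.single (upd_pair i m a (Suc b)) 1 - Poly_Mapping.single (upd_pair i m b (Suc a)) 1"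
      using var_diff_mult_segment[of a b i m, where 'a = 'a] False by simp
    finally show ?thesis .
  qed
  ultimately show ?thesis by simp
qed

lemma poly_mapping_expansion:
  "f = (\<Sum>m\<in>Poly_Mapping.keys f. Poly_Mapping.single m (Poly_Mapping.lookup f m))"
  by (rule poly_mapping_eqI) (simp add: lookup_sum lookup_single when_def in_keys_iff)

lemma lookup_const_mult:
  "Poly_Mapping.lookup (Poly_Mapping.single 0 c * p) x = c * Poly_Mapping.lookup p x" for p :: "'a::field mpoly"
  by (simp add: mult_map_scale_conv_mult[symmetric] Poly_Mapping.map.rep_eq when_def)

lemma var_diff_nonzero: "(var i - var (i + 1) :: 'a::field mpoly) \<noteq> 0"
proof
  have "Poly_Mapping.lookup (Poly_Mapping.single (i + 1) (1::nat)) i = 0"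
    by (simp add: lookup_single_not_eq)
  then have "Poly_Mapping.single (i + 1) (1::nat) \<noteq> Poly_Mapping.single i 1"
    by (metis lookup_single_eq zero_neq_one)
  then have "Poly_Mapping.lookup (var i - var (i + 1) :: 'a mpoly) (Poly_Mapping.single i 1) = 1"
    by (simp add: var_def lookup_minus lookup_single_not_eq)
  moreover assume "(var i - var (i + 1) :: 'a mpoly) = 0"
  ultimately show False by simp
qed

lemma pibar_eq_sum:
  "pibar i f = (\<Sum>m\<in>Poly_Mapping.keys f. Poly_Mapping.single 0 (Poly_Mapping.lookup f m) * pibar_monomial i m)"
  for f :: "'a::field mpoly"
proof -
  let ?c = "\<lambda>m. Poly_Mapping.single 0 (Poly_Mapping.lookup f m) :: 'a mpoly"
  let ?g = "\<Sum>m\<in>Poly_Mapping.keys f. ?c m * pibar_monomial i m"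
  have expand: "(\<Sum>m\<in>Poly_Mapping.keys f. ?c m * Poly_Mapping.single (h m) 1) =
      (\<Sum>m\<in>Poly_Mapping.keys f. Poly_Mapping.single (h m) (Poly_Mapping.lookup f m))" for h
    by (simp add: mult_single)
  have "(var i - var (i + 1)) * ?g =
      var (i + 1) * ((\<Sum>m\<in>Poly_Mapping.keys f. ?c m * Poly_Mapping.single m 1) -
        (\<Sum>m\<in>Poly_Mapping.keys f. ?c m * Poly_Mapping.single (perm_mono (s i) m) 1))"
    unfolding sum_distrib_left right_diff_distrib sum_subtractf[symmetric]
  proof (intro sum.cong refl)
    fix m
    have "(var i - var (i + 1)) * (?c m * pibar_monomial i m) = ?c m * ((var i - var (i + 1)) * pibar_monomial i m)"
      by (simp only: mult.left_commute)
    also have "\<dots> = ?c m * (var (i + 1) * (Poly_Mapping.single m 1 - Poly_Mapping.single (perm_mono (s i) m) 1))"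
      by (simp only: var_diff_mult_pibar_monomial)
    finally show "(var i - var (i + 1)) * (?c m * pibar_monomial i m) =
        var (i + 1) * (?c m * Poly_Mapping.single m 1) - var (i + 1) * (?c m * Poly_Mapping.single (perm_mono (s i) m) 1)"
      by (simp add: algebra_simps)
  qed
  also have "\<dots> = var (i + 1) * (f - perm_poly (s i) f)"
    unfolding expand perm_poly_def by (simp only: poly_mapping_expansion[of f, symmetric])
  finally have g: "(var i - var (i + 1)) * ?g = var (i + 1) * (f - perm_poly (s i) f)" .
  show ?thesis
    unfolding pibar_def
  proof (rule the_equality)
    fix h assume "(var i - var (i + 1)) * h = var (i + 1) * (f - perm_poly (s i) f)"
    then have "(var i - var (i + 1)) * h = (var i - var (i + 1)) * ?g" using g by (simp only:)
    then show "h = ?g" by (simp only: mult_left_cancel[OF var_diff_nonzero])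
  qed (rule g)
qed

lemma lookup_pibar:
  "Poly_Mapping.lookup (pibar i f) y =
    (\<Sum>m\<in>Poly_Mapping.keys f. Poly_Mapping.lookup f m * Poly_Mapping.lookup (pibar_monomial i m :: 'a::field mpoly) y)"
  unfolding pibar_eq_sum by (simp add: lookup_sum lookup_const_mult)

lemma keys_pibar:
  assumes "y \<in> Poly_Mapping.keys (pibar i (f :: 'a::field mpoly))"
  obtains m where "m \<in> Poly_Mapping.keys f" and "y \<in> Poly_Mapping.keys (pibar_monomial i m :: 'a mpoly)"
proof -
  have "(\<Sum>m\<in>Poly_Mapping.keys f. Poly_Mapping.lookup f m * Poly_Mapping.lookup (pibar_monomial i m :: 'a mpoly) y) \<noteq> 0"
    using assms by (simp add: in_keys_iff lookup_pibar)
  then obtain m where "m \<in> Poly_Mapping.keys f"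
    "Poly_Mapping.lookup f m * Poly_Mapping.lookup (pibar_monomial i m :: 'a mpoly) y \<noteq> 0"
    using sum.not_neutral_contains_not_neutral by blast
  then show ?thesis using that by (simp add: in_keys_iff)
qed

lemma keys_pibar_monomial:
  assumes "y \<in> Poly_Mapping.keys (pibar_monomial i m :: 'a::field mpoly)"
  defines "a \<equiv> Poly_Mapping.lookup m i" and "b \<equiv> Poly_Mapping.lookup m (i + 1)"
  obtains \<gamma> where "min a b < \<gamma>" and "\<gamma> \<le> max a b" and "y = upd_pair i m (a + b - \<gamma>) \<gamma>"
proof -
  let ?S = "\<lambda>p q. \<Sum>\<gamma>\<in>{p<..q}. Poly_Mapping.single (upd_pair i m (a + b - \<gamma>) \<gamma>) (1::'a)"
  have "y \<in> Poly_Mapping.keys (?S (min a b) (max a b))"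
  proof (cases "b \<le> a")
    case True
    then show ?thesis
      using assms(1) unfolding pibar_monomial_def a_def[symmetric] b_def[symmetric] Let_def by simp
  next
    case False
    then have "y \<in> Poly_Mapping.keys (- ?S a b)"
      using assms(1) unfolding pibar_monomial_def a_def[symmetric] b_def[symmetric] Let_def by simp
    then show ?thesis using False by (simp add: in_keys_iff)
  qed
  then obtain \<gamma> where "\<gamma> \<in> {min a b<..max a b}"
    "y \<in> Poly_Mapping.keys (Poly_Mapping.single (upd_pair i m (a + b - \<gamma>) \<gamma>) (1::'a))"
    using keys_sum[of "\<lambda>\<gamma>. Poly_Mapping.single (upd_pair i m (a + b - \<gamma>) \<gamma>) (1::'a)"] by blast
  then show ?thesis using that by auto
qed

lemma lookup_pibar_monomial_perm:
  assumes "Poly_Mapping.lookup m (i + 1) < Poly_Mapping.lookup m i"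
  shows "Poly_Mapping.lookup (pibar_monomial i m :: 'a::field mpoly) (perm_mono (s i) m) = 1"
proof -
  define a where "a = Poly_Mapping.lookup m i"
  define b where "b = Poly_Mapping.lookup m (i + 1)"
  have "b < a" using assms unfolding a_def b_def .
  have "Poly_Mapping.lookup (pibar_monomial i m :: 'a mpoly) (perm_mono (s i) m) =
      (\<Sum>\<gamma>\<in>{b<..a}. if upd_pair i m (a + b - \<gamma>) \<gamma> = upd_pair i m b a then 1 else 0)"
    unfolding pibar_monomial_def perm_mono_s a_def[symmetric] b_def[symmetric] Let_def
    using \<open>b < a\<close> by (simp add: lookup_sum lookup_single when_def)
  also have "\<dots> = (\<Sum>\<gamma>\<in>{b<..a}. if \<gamma> = a then 1 else 0)"
    by (intro sum.cong refl) (auto simp: upd_pair_eq_iff)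
  also have "\<dots> = 1" using \<open>b < a\<close> by simp
  finally show ?thesis .
qed

section \<open>The leading term\<close>

lemma neglex_leading_term_eqI:
  assumes "E \<in> Poly_Mapping.keys f" and "\<And>m. m \<in> Poly_Mapping.keys f \<Longrightarrow> m \<noteq> E \<Longrightarrow> neglex_less m E"
  shows "neglex_leading_term f = Poly_Mapping.single E (Poly_Mapping.lookup f E)"
  unfolding neglex_leading_term_def
proof (rule the_equality)
  fix t
  assume "\<exists>m. m \<in> Poly_Mapping.keys f \<and> (\<forall>m'\<in>Poly_Mapping.keys f. m' \<noteq> m \<longrightarrow> neglex_less m' m)
    \<and> t = Poly_Mapping.single m (Poly_Mapping.lookup f m)"
  then obtain m where m: "m \<in> Poly_Mapping.keys f" "\<forall>m'\<in>Poly_Mapping.keys f. m' \<noteq> m \<longrightarrow> neglex_less m' m"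
    "t = Poly_Mapping.single m (Poly_Mapping.lookup f m)" by blast
  have "m = E"
  proof (rule ccontr)
    assume "m \<noteq> E"
    then have "neglex_less E m" "neglex_less m E" using m(1,2) assms by auto
    then show False using neglex_lt_asym unfolding neglex_less_iff by blast
  qed
  then show "t = Poly_Mapping.single E (Poly_Mapping.lookup f E)" using m(3) by simp
qed (use assms in auto)

lemma lookup_perm_mono_xpow_exp:
  assumes "v permutes {1..n}"
  shows "Poly_Mapping.lookup (perm_mono v (xpow_exp n d)) j = (if j \<in> {1..n} then d (inv v j) else 0)"
  using permutes_in_image[OF permutes_inv[OF assms], of j]
  by (simp add: lookup_perm_mono[OF permutes_bij[OF assms]] lookup_xpow_exp)

lemma perm_mono_comp: "bij u \<Longrightarrow> bij v \<Longrightarrow> perm_mono (u \<circ> v) m = perm_mono u (perm_mono v m)"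
  by (simp add: poly_mapping_eq_iff lookup_perm_mono bij_comp o_inv_distrib o_assoc)

lemma pibar_word_Cons: "pibar_word (i # is) f = pibar i (pibar_word is f)"
  unfolding pibar_word_def by simp

definition dominated_support :: "nat \<Rightarrow> (nat \<Rightarrow>\<^sub>0 nat) \<Rightarrow> 'a::field mpoly \<Rightarrow> bool" where
  "dominated_support n E f \<longleftrightarrow> Poly_Mapping.lookup f E = 1 \<and>
    (\<forall>m\<in>Poly_Mapping.keys f. mean_of {x. dominated n (Poly_Mapping.lookup E) x} (Poly_Mapping.lookup m))"

lemma dominated_support_single:
  "(\<forall>j. j \<notin> {1..n} \<longrightarrow> Poly_Mapping.lookup E j = 0) \<Longrightarrow> dominated_support n E (Poly_Mapping.single E 1)"
  unfolding dominated_support_def mean_of_def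
  by (auto intro!: exI[of _ "{#Poly_Mapping.lookup E#}"] is_mean_singleton dominated_refl)

lemma keys_pibar_monomial_dominated:
  assumes m: "mean_of {x. dominated n (Poly_Mapping.lookup E) x} (Poly_Mapping.lookup m)"
    and i: "1 \<le> i" "i < n" and desc: "Poly_Mapping.lookup E (i + 1) < Poly_Mapping.lookup E i"
    and E: "\<forall>j. j \<notin> {1..n} \<longrightarrow> Poly_Mapping.lookup E j = 0"
    and c: "c \<in> Poly_Mapping.keys (pibar_monomial i m :: 'a::field mpoly)"
  shows "mean_of {x. dominated n (Poly_Mapping.lookup (perm_mono (s i) E)) x} (Poly_Mapping.lookup c)"
    and "m \<noteq> E \<Longrightarrow> c \<noteq> perm_mono (s i) E"
proof -
  obtain \<gamma> where \<gamma>: "min (Poly_Mapping.lookup m i) (Poly_Mapping.lookup m (i + 1)) < \<gamma>"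
    "\<gamma> \<le> max (Poly_Mapping.lookup m i) (Poly_Mapping.lookup m (i + 1))"
    and "c = upd_pair i m (Poly_Mapping.lookup m i + Poly_Mapping.lookup m (i + 1) - \<gamma>) \<gamma>"
    using keys_pibar_monomial[OF c] by blast
  then have c_eq: "Poly_Mapping.lookup c = (Poly_Mapping.lookup m)
      (i := Poly_Mapping.lookup m i + Poly_Mapping.lookup m (i + 1) - \<gamma>, i + 1 := \<gamma>)"
    by (simp only: lookup_upd_pair)
  have E': "Poly_Mapping.lookup (perm_mono (s i) E) = Poly_Mapping.lookup E \<circ> s i"
    by (simp add: lookup_perm_mono[OF bij_s])
  note step = mean_of_dominated_step[OF m i desc E \<gamma>]
  show "mean_of {x. dominated n (Poly_Mapping.lookup (perm_mono (s i) E)) x} (Poly_Mapping.lookup c)"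
    unfolding c_eq E' by (rule step(1))
  assume "m \<noteq> E"
  then have "Poly_Mapping.lookup m \<noteq> Poly_Mapping.lookup E" using poly_mapping_eq_iff by blast
  then have "Poly_Mapping.lookup c \<noteq> Poly_Mapping.lookup (perm_mono (s i) E)"
    unfolding c_eq E' by (rule step(2))
  then show "c \<noteq> perm_mono (s i) E" by blast
qed

text \<open>Only the monomial \<open>E\<close> of \<open>f\<close> contributes to the coefficient of \<open>perm_mono (s i) E\<close>
  in \<open>pibar i f\<close>.\<close>

lemma dominated_support_pibar:
  assumes f: "dominated_support n E (f :: 'a::field mpoly)"
    and i: "1 \<le> i" "i < n" and desc: "Poly_Mapping.lookup E (i + 1) < Poly_Mapping.lookup E i"
    and E: "\<forall>j. j \<notin> {1..n} \<longrightarrow> Poly_Mapping.lookup E j = 0"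
  shows "dominated_support n (perm_mono (s i) E) (pibar i f)"
proof -
  note keys = keys_pibar_monomial_dominated[OF _ i desc E]
  have means: "\<forall>m\<in>Poly_Mapping.keys f. mean_of {x. dominated n (Poly_Mapping.lookup E) x} (Poly_Mapping.lookup m)"
    using f unfolding dominated_support_def by blast
  have zero: "Poly_Mapping.lookup (pibar_monomial i m :: 'a mpoly) (perm_mono (s i) E) = 0"
    if "m \<in> Poly_Mapping.keys f" "m \<noteq> E" for m
    using keys(2)[OF means[rule_format, OF that(1)], of "perm_mono (s i) E"] that(2)
    unfolding in_keys_iff by blast
  have "Poly_Mapping.lookup (pibar i f) (perm_mono (s i) E) =
      (\<Sum>m\<in>Poly_Mapping.keys f. if m = E
        then Poly_Mapping.lookup f E * Poly_Mapping.lookup (pibar_monomial i E :: 'a mpoly) (perm_mono (s i) E) else 0)"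
    unfolding lookup_pibar using zero by (intro sum.cong refl) (auto simp: in_keys_iff)
  also have "\<dots> = 1"
    using f desc unfolding dominated_support_def by (simp add: in_keys_iff lookup_pibar_monomial_perm)
  finally show ?thesis
    using means keys(1) unfolding dominated_support_def by (blast elim: keys_pibar)
qed

lemma pibar_word_dominated_support:
  assumes dec: "\<And>i j. 1 \<le> i \<Longrightarrow> i \<le> j \<Longrightarrow> j \<le> n \<Longrightarrow> d j \<le> d i"
    and des: "Des_perm n w \<subseteq> Des_seq n d"
  shows "reduced_word n w (pre @ suf) \<Longrightarrow>
    dominated_support n (perm_mono (word_perm suf) (xpow_exp n d)) (pibar_word suf (xpow n d) :: 'a::field mpoly)"
proof (induction suf arbitrary: pre)
  case Nil
  have "perm_mono (word_perm []) (xpow_exp n d) = xpow_exp n d"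
    unfolding word_perm_def by (simp add: poly_mapping_eq_iff lookup_perm_mono)
  then show ?case
    unfolding pibar_word_def by (simp add: xpow_eq_single dominated_support_single lookup_xpow_exp)
next
  case (Cons i suf)
  define v where "v = word_perm suf"
  have "\<forall>j\<in>set suf. 1 \<le> j \<and> j < n" using Cons.prems unfolding reduced_word_def by simp
  then have v: "v permutes {1..n}" unfolding v_def by (rule word_perm_permutes)
  note E = lookup_perm_mono_xpow_exp[OF v, of d]
  have i: "1 \<le> i" "i < n" using reduced_word_letter(1,2)[OF Cons.prems] .
  have "dominated_support n (perm_mono v (xpow_exp n d)) (pibar_word suf (xpow n d) :: 'a mpoly)"
    using Cons.IH[of "pre @ [i]"] Cons.prems unfolding v_def by simp
  moreover have "d (inv v (i + 1)) < d (inv v i)"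
    using reduced_word_letter_descent[OF dec des Cons.prems] unfolding v_def .
  ultimately have "dominated_support n (perm_mono (s i) (perm_mono v (xpow_exp n d)))
      (pibar i (pibar_word suf (xpow n d)) :: 'a mpoly)"
    using i E by (intro dominated_support_pibar) simp_all
  moreover have "perm_mono (word_perm (i # suf)) (xpow_exp n d) = perm_mono (s i) (perm_mono v (xpow_exp n d))"
    unfolding word_perm_Cons v_def using bij_s permutes_bij[OF v[unfolded v_def]] by (rule perm_mono_comp)
  ultimately show ?case by (simp only: pibar_word_Cons)
qed

lemma neglex_leading_term_dominated_support:
  assumes "dominated_support n E f" and E: "\<forall>j. j \<notin> {1..n} \<longrightarrow> Poly_Mapping.lookup E j = 0"
  shows "neglex_leading_term f = Poly_Mapping.single E 1"
proof -
  have "\<forall>x\<in>{x. dominated n (Poly_Mapping.lookup E) x}. x = Poly_Mapping.lookup E \<or> neglex_lt x (Poly_Mapping.lookup E)"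
    using dominated_neglex_le[OF _ E] by blast
  then have "neglex_less m E" if "m \<in> Poly_Mapping.keys f" "m \<noteq> E" for m
    using assms(1) mean_of_neglex_le that poly_mapping_eq_iff[of m E]
    unfolding neglex_less_iff dominated_support_def by blast
  then show ?thesis
    using neglex_leading_term_eqI[of E f] assms(1) unfolding dominated_support_def by (simp add: in_keys_iff)
qed

theorem mainTheorem12:
  fixes n :: nat and d :: "nat \<Rightarrow> nat" and w :: "nat \<Rightarrow> nat" and "is" :: "nat list"
  assumes dec: "\<And>i j. 1 \<le> i \<Longrightarrow> i \<le> j \<Longrightarrow> j \<le> n \<Longrightarrow> d j \<le> d i"
    and perm: "w permutes {1..n}"
    and des: "Des_perm n w \<subseteq> Des_seq n d"
    and red: "reduced_word n w is"
  shows "neglex_leading_term (pibar_word is (xpow n d :: 'a::field mpoly))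
           = perm_poly w (xpow n d)"
proof -
  have "word_perm is = w" using red unfolding reduced_word_def by simp
  moreover have "reduced_word n w ([] @ is)" using red by simp
  ultimately have "dominated_support n (perm_mono w (xpow_exp n d)) (pibar_word is (xpow n d) :: 'a mpoly)"
    using pibar_word_dominated_support[OF dec des] by metis
  moreover have "\<forall>j. j \<notin> {1..n} \<longrightarrow> Poly_Mapping.lookup (perm_mono w (xpow_exp n d)) j = 0"
    by (simp add: lookup_perm_mono_xpow_exp[OF perm])
  ultimately show ?thesis
    by (simp add: neglex_leading_term_dominated_support xpow_eq_single perm_poly_single)
qed

end
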